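(* Let $\Gamma$ be a metrized graph with $v \geq 4$ vertices. Then $$(v-4)\,Kf(\Gamma)=\sum_{e_i \in E(\Gamma)} \frac{R_i}{L_i+R_i}\, Kf(\overline{\Gamma}_i) - v\cdot y(\Gamma).$$
   Context: A metrized graph $\Gamma$ is a finite connected graph (multiple edges and self-loops allowed) each of whose edges is identified with a closed segment of positive length. Its vertex set $V(\Gamma)$ is a finite nonempty set of points containing every point whose valence (number of directions emanating from it) is not $2$; $v=\#V(\Gamma)$; $E(\Gamma)$ is the set of edges (closed segments between vertices), and $L_i$ is the length of the edge $e_i$. $r(x,y)$ is the effective resistance on $\Gamma$ (each edge a resistor with resistance equal to its length), and $r_\beta$ is the resistance function on a metrized graph $\beta$. For an edge $e_i$ with end points $p_i,q_i$, $\Gamma-e_i$ is the graph with the interior of $e_i$ deleted. If $\Gamma-e_i$ is connected, $R_i$ is the effective resistance between $p_i$ and $q_i$ in $\Gamma-e_i$, and for a point $p$, $R_{a_i,p}=\hat j_{p_i}(p,q_i)$ and $R_{b_i,p}=\hat j_{q_i}(p,p_i)$, where $\hat j_z(x,y)$ is the voltage function of $\Gamma-e_i$ (the potential at $x$ when unit current enters at $y$ and exits at $z$, with potential $0$ at $z$); thus $R_{a_i,p}+R_{b_i,p}=R_i$. If $e_i$ is a bridge, one sets $R_{a_i,p}=0,\ R_{b_i,p}=R_i$ when $p$ lies in the component of $\Gamma-e_i$ containing $p_i$, and $R_{a_i,p}=R_i,\ R_{b_i,p}=0$ otherwise, and every expression involving $R_i$ is interpreted as its limit as $R_i\to\infty$.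 For a self-loop, $R_i=0$. The Kirchhoff index is $Kf(\Gamma)=\frac12\sum_{p,q\in V(\Gamma)} r(p,q)$. $\overline{\Gamma}_i$ is the metrized graph obtained by contracting $e_i$ to a point (identifying $p_i$ and $q_i$), with vertex set the image of $V(\Gamma)$; the quantities for $\overline\Gamma_i$ are computed in $\overline\Gamma_i$. For a fixed vertex $p$ (the value is independent of the choice), $$y(\Gamma)=\frac14\sum_{e_i\in E(\Gamma)}\frac{L_iR_i^2}{(L_i+R_i)^2}+\frac34\sum_{e_i\in E(\Gamma)}\frac{L_i(R_{a_i,p}-R_{b_i,p})^2}{(L_i+R_i)^2}.$$ *)

theory Defs
  imports Complex_Main
begin

text \<open>A metrized graph (with a chosen vertex set) is modelled combinatorially:
  a vertex set V, an edge set E, endpoints ends e = (p_e, q_e), and lengths L e > 0.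
  Multiple edges and self-loops are allowed.  All interior points of edges have
  valence 2, so any vertex set is admissible.\<close>

definition graph_connected :: "'v set \<Rightarrow> 'e set \<Rightarrow> ('e \<Rightarrow> 'v \<times> 'v) \<Rightarrow> bool" where
  "graph_connected V E ends \<longleftrightarrow>
     (\<forall>x\<in>V. \<forall>y\<in>V. (x, y) \<in> (\<Union>e\<in>E. {ends e, prod.swap (ends e)})\<^sup>*)"

definition metrized_graph :: "'v set \<Rightarrow> 'e set \<Rightarrow> ('e \<Rightarrow> 'v \<times> 'v) \<Rightarrow> ('e \<Rightarrow> real) \<Rightarrow> bool" where
  "metrized_graph V E ends L \<longleftrightarrow>
     finite V \<and> V \<noteq> {} \<and> finite E \<and>
     (\<forall>e\<in>E. fst (ends e) \<in> V \<and> snd (ends e) \<in> V \<and> L e > 0) \<and>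
     graph_connected V E ends"

text \<open>Net current leaving vertex u through the edges, for the potential f
  (each edge is a resistor of resistance L e).\<close>
definition net_current :: "'e set \<Rightarrow> ('e \<Rightarrow> 'v \<times> 'v) \<Rightarrow> ('e \<Rightarrow> real) \<Rightarrow> ('v \<Rightarrow> real) \<Rightarrow> 'v \<Rightarrow> real" where
  "net_current E ends L f u =
     (\<Sum>e\<in>{e\<in>E. fst (ends e) = u}. (f u - f (snd (ends e))) / L e) +
     (\<Sum>e\<in>{e\<in>E. snd (ends e) = u}. (f u - f (fst (ends e))) / L e)"

text \<open>Voltage function: voltage V E ends L z y x = j_z(x,y), the potential at x when
  unit current enters at y and exits at z, with potential 0 at z.\<close>
definition voltage :: "'v set \<Rightarrow> 'e set \<Rightarrow> ('e \<Rightarrow> 'v \<times> 'v) \<Rightarrow> ('e \<Rightarrow> real) \<Rightarrow> 'v \<Rightarrow> 'v \<Rightarrow> 'v \<Rightarrow> real" where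
  "voltage V E ends L z y =
     (THE f. (\<forall>u\<in>V. net_current E ends L f u = (if u = y then 1 else 0) - (if u = z then 1 else 0))
             \<and> f z = 0 \<and> (\<forall>u. u \<notin> V \<longrightarrow> f u = 0))"

definition eff_res :: "'v set \<Rightarrow> 'e set \<Rightarrow> ('e \<Rightarrow> 'v \<times> 'v) \<Rightarrow> ('e \<Rightarrow> real) \<Rightarrow> 'v \<Rightarrow> 'v \<Rightarrow> real" where
  "eff_res V E ends L x y = voltage V E ends L y x x"

definition kirchhoff_index :: "'v set \<Rightarrow> 'e set \<Rightarrow> ('e \<Rightarrow> 'v \<times> 'v) \<Rightarrow> ('e \<Rightarrow> real) \<Rightarrow> real" where
  "kirchhoff_index V E ends L = (1/2) * (\<Sum>p\<in>V. \<Sum>q\<in>V. eff_res V E ends L p q)"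

definition is_bridge :: "'v set \<Rightarrow> 'e set \<Rightarrow> ('e \<Rightarrow> 'v \<times> 'v) \<Rightarrow> 'e \<Rightarrow> bool" where
  "is_bridge V E ends i \<longleftrightarrow> i \<in> E \<and> \<not> graph_connected V (E - {i}) ends"

text \<open>R_i, R_{a_i,p}, R_{b_i,p} computed in Gamma - e_i (meaningful when e_i is not a bridge).\<close>
definition R_del :: "'v set \<Rightarrow> 'e set \<Rightarrow> ('e \<Rightarrow> 'v \<times> 'v) \<Rightarrow> ('e \<Rightarrow> real) \<Rightarrow> 'e \<Rightarrow> real" where
  "R_del V E ends L i = eff_res V (E - {i}) ends L (fst (ends i)) (snd (ends i))"

definition R_a :: "'v set \<Rightarrow> 'e set \<Rightarrow> ('e \<Rightarrow> 'v \<times> 'v) \<Rightarrow> ('e \<Rightarrow> real) \<Rightarrow> 'e \<Rightarrow> 'v \<Rightarrow> real" where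
  "R_a V E ends L i p = voltage V (E - {i}) ends L (fst (ends i)) (snd (ends i)) p"

definition R_b :: "'v set \<Rightarrow> 'e set \<Rightarrow> ('e \<Rightarrow> 'v \<times> 'v) \<Rightarrow> ('e \<Rightarrow> real) \<Rightarrow> 'e \<Rightarrow> 'v \<Rightarrow> real" where
  "R_b V E ends L i p = voltage V (E - {i}) ends L (snd (ends i)) (fst (ends i)) p"

text \<open>Per-edge terms; for a bridge they are the limits as R_i tends to infinity
  (with R_{a_i,p}, R_{b_i,p} equal to 0 and R_i in some order): all limits equal the stated values.\<close>
definition contr_coef :: "'v set \<Rightarrow> 'e set \<Rightarrow> ('e \<Rightarrow> 'v \<times> 'v) \<Rightarrow> ('e \<Rightarrow> real) \<Rightarrow> 'e \<Rightarrow> real" where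
  "contr_coef V E ends L i =
     (if is_bridge V E ends i then 1
      else R_del V E ends L i / (L i + R_del V E ends L i))"

definition y_term1 :: "'v set \<Rightarrow> 'e set \<Rightarrow> ('e \<Rightarrow> 'v \<times> 'v) \<Rightarrow> ('e \<Rightarrow> real) \<Rightarrow> 'e \<Rightarrow> real" where
  "y_term1 V E ends L i =
     (if is_bridge V E ends i then L i
      else L i * (R_del V E ends L i)\<^sup>2 / (L i + R_del V E ends L i)\<^sup>2)"

definition y_term2 :: "'v set \<Rightarrow> 'e set \<Rightarrow> ('e \<Rightarrow> 'v \<times> 'v) \<Rightarrow> ('e \<Rightarrow> real) \<Rightarrow> 'e \<Rightarrow> 'v \<Rightarrow> real" where
  "y_term2 V E ends L i p =
     (if is_bridge V E ends i then L i
      else L i * (R_a V E ends L i p - R_b V E ends L i p)\<^sup>2 / (L i + R_del V E ends L i)\<^sup>2)"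

definition y_inv :: "'v set \<Rightarrow> 'e set \<Rightarrow> ('e \<Rightarrow> 'v \<times> 'v) \<Rightarrow> ('e \<Rightarrow> real) \<Rightarrow> 'v \<Rightarrow> real" where
  "y_inv V E ends L p =
     (1/4) * (\<Sum>i\<in>E. y_term1 V E ends L i) + (3/4) * (\<Sum>i\<in>E. y_term2 V E ends L i p)"

definition contract_map :: "('e \<Rightarrow> 'v \<times> 'v) \<Rightarrow> 'e \<Rightarrow> 'v \<Rightarrow> 'v" where
  "contract_map ends i x = (if x = snd (ends i) then fst (ends i) else x)"

definition kf_contracted :: "'v set \<Rightarrow> 'e set \<Rightarrow> ('e \<Rightarrow> 'v \<times> 'v) \<Rightarrow> ('e \<Rightarrow> real) \<Rightarrow> 'e \<Rightarrow> real" where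
  "kf_contracted V E ends L i =
     kirchhoff_index (contract_map ends i ` V) (E - {i})
       (\<lambda>e. map_prod (contract_map ends i) (contract_map ends i) (ends e)) L"

end

theory Submission
  imports Defs "Jordan_Normal_Form.Determinant"
begin

text \<open>Ground the vertex p and let green x y be the potential at x of a unit current entering at y
  and leaving at p.  Every quantity in the identity is a quadratic expression in green.  With
  psi e = green(., p_e) - green(., q_e), the potential of a unit current through the ends of e,
  one has r(x,y) = green x x + green y y - 2 green x y and
  sum_e psi_e(x) psi_e(y) / L_e = green x y.  The coefficient R_e / (L_e + R_e) equals the
  current c_e = r(p_e,q_e) / L_e through e (also for bridges, c_e = 1, and self-loops, c_e = 0),
  the two summands of y(Gamma) are L_e c_e^2 and (psi_e(p_e) + psi_e(q_e))^2 / L_e, and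
  contracting e changes the resistance to r(x,y) - (psi_e(x) - psi_e(y))^2 / r(p_e,q_e).
  Summing over the edges, Foster's identity sum_e c_e = v - 1 and Green's identity reduce
  everything to the trace T and the total sum S of green, with Kf = v T - S.\<close>

section \<open>Square linear systems\<close>

lemma mult_mat_vec_surj_if_inj:
  fixes A :: "'a :: field mat"
  assumes A: "A \<in> carrier_mat n n"
    and inj: "\<And>v. v \<in> carrier_vec n \<Longrightarrow> A *\<^sub>v v = 0\<^sub>v n \<Longrightarrow> v = 0\<^sub>v n"
    and b: "b \<in> carrier_vec n"
  shows "\<exists>v \<in> carrier_vec n. A *\<^sub>v v = b"
proof -
  have "det A \<noteq> 0"
    using det_0_iff_vec_prod_zero_field[OF A] inj by blast
  then obtain B where B: "B \<in> carrier_mat n n" "A * B = 1\<^sub>m n"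
    using det_non_zero_imp_unit[OF A, of "()"] unfolding Units_def by (auto simp: ring_mat_def)
  have "A *\<^sub>v (B *\<^sub>v b) = (A * B) *\<^sub>v b"
    using assoc_mult_mat_vec[of A n n B n b] A B(1) b by simp
  also have "\<dots> = b" using B(2) b by simp
  finally show ?thesis using B(1) b by (intro bexI[of _ "B *\<^sub>v b"]) auto
qed

lemma square_system_solvable:
  fixes M :: "'v \<Rightarrow> 'v \<Rightarrow> real"
  assumes fin: "finite V"
    and inj: "\<And>x. \<forall>u\<in>V. (\<Sum>w\<in>V. M u w * x w) = 0 \<Longrightarrow> \<forall>w\<in>V. x w = 0"
  shows "\<exists>x. \<forall>u\<in>V. (\<Sum>w\<in>V. M u w * x w) = b u"
proof -
  obtain vs where vs: "set vs = V" "distinct vs" using finite_distinct_list[OF fin] by blast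
  define n where "n = length vs"
  have bij: "bij_betw ((!) vs) {..<n} V"
    using bij_betw_nth[OF vs(2) _ vs(1)[symmetric]] n_def by simp
  then have idx: "\<And>u. u \<in> V \<Longrightarrow> \<exists>i<n. u = vs ! i"
    by (metis bij_betw_iff_bijections lessThan_iff)
  have reindex: "\<And>F. (\<Sum>w\<in>V. F w) = (\<Sum>j<n. F (vs ! j))"
    using sum.reindex_bij_betw[OF bij] by metis
  define A where "A = mat n n (\<lambda>(i, j). M (vs ! i) (vs ! j))"
  have A: "A \<in> carrier_mat n n" unfolding A_def by simp
  define fun_of where "fun_of v w = v $ the_inv_into {..<n} ((!) vs) w" for v :: "real vec" and w
  have fun_of: "\<And>v j. j < n \<Longrightarrow> fun_of v (vs ! j) = v $ j"
    unfolding fun_of_def using bij by (simp add: bij_betw_def the_inv_into_f_f)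
  have system: "(\<Sum>w\<in>V. M (vs ! i) w * fun_of v w) = (A *\<^sub>v v) $ i"
    if "v \<in> carrier_vec n" "i < n" for v i
    using that by (simp add: reindex fun_of A_def scalar_prod_def lessThan_atLeast0)
  have "\<exists>v \<in> carrier_vec n. A *\<^sub>v v = vec n (\<lambda>i. b (vs ! i))"
  proof (rule mult_mat_vec_surj_if_inj[OF A])
    fix v :: "real vec" assume v: "v \<in> carrier_vec n" and Av: "A *\<^sub>v v = 0\<^sub>v n"
    have "\<forall>u\<in>V. (\<Sum>w\<in>V. M u w * fun_of v w) = 0"
      using idx system[OF v] Av by (metis index_zero_vec(1))
    then have "\<forall>w\<in>V. fun_of v w = 0" by (rule inj)
    then have "\<forall>j<n. v $ j = 0" using fun_of bij by (metis bij_betw_apply lessThan_iff)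
    then show "v = 0\<^sub>v n" using v by (intro eq_vecI) auto
  qed simp
  then obtain v where v: "v \<in> carrier_vec n" "A *\<^sub>v v = vec n (\<lambda>i. b (vs ! i))" by blast
  have "\<forall>u\<in>V. (\<Sum>w\<in>V. M u w * fun_of v w) = b u"
    using idx system[OF v(1)] v(2) by (metis index_vec)
  then show ?thesis by blast
qed

section \<open>Connectivity\<close>

definition edge_rel :: "'e set \<Rightarrow> ('e \<Rightarrow> 'v \<times> 'v) \<Rightarrow> ('v \<times> 'v) set" where
  "edge_rel E ends = (\<Union>e\<in>E. {ends e, prod.swap (ends e)})"

lemma graph_connected_edge_rel:
  "graph_connected V E ends \<longleftrightarrow> (\<forall>x\<in>V. \<forall>y\<in>V. (x, y) \<in> (edge_rel E ends)\<^sup>*)"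
  unfolding graph_connected_def edge_rel_def by simp

lemma edge_rel_edge:
  "e \<in> E \<Longrightarrow> (fst (ends e), snd (ends e)) \<in> edge_rel E ends"
  "e \<in> E \<Longrightarrow> (snd (ends e), fst (ends e)) \<in> edge_rel E ends"
  unfolding edge_rel_def by (auto intro!: UN_I[of e] simp: prod.swap_def)

lemma edge_relE:
  assumes "(x, y) \<in> edge_rel E ends"
  obtains e where "e \<in> E" "x = fst (ends e) \<and> y = snd (ends e) \<or> x = snd (ends e) \<and> y = fst (ends e)"
proof -
  from assms obtain e where "e \<in> E" "(x, y) = ends e \<or> (x, y) = prod.swap (ends e)"
    unfolding edge_rel_def by auto
  then show thesis using that by (cases "ends e") auto
qed

lemma edge_rel_rtrancl_sym:
  assumes "(x, y) \<in> (edge_rel E ends)\<^sup>*"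
  shows "(y, x) \<in> (edge_rel E ends)\<^sup>*"
proof -
  have conv: "(edge_rel E ends)\<inverse> = edge_rel E ends"
    unfolding edge_rel_def by (auto; metis swap_swap swap_simp)
  have "(y, x) \<in> ((edge_rel E ends)\<inverse>)\<^sup>*"
    using assms by (rule rtrancl_converseI)
  then show ?thesis by (simp only: conv)
qed

lemma edge_const_imp_rtrancl_const:
  assumes "\<forall>e\<in>E. h (fst (ends e)) = h (snd (ends e))" "(x, y) \<in> (edge_rel E ends)\<^sup>*"
  shows "h x = h y"
  using assms(2)
proof (induction rule: rtrancl_induct)
  case (step y z)
  from step.hyps(2) obtain e where "e \<in> E"
    "y = fst (ends e) \<and> z = snd (ends e) \<or> y = snd (ends e) \<and> z = fst (ends e)"
    by (rule edge_relE)
  then show ?case using assms(1) step.IH by auto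
qed simp

lemma reachable_fst_iff_snd:
  assumes "e \<in> E"
  shows "(a, fst (ends e)) \<in> (edge_rel E ends)\<^sup>* \<longleftrightarrow> (a, snd (ends e)) \<in> (edge_rel E ends)\<^sup>*"
proof
  show "(a, snd (ends e)) \<in> (edge_rel E ends)\<^sup>*" if "(a, fst (ends e)) \<in> (edge_rel E ends)\<^sup>*"
    using rtrancl_into_rtrancl[OF that edge_rel_edge(1)[OF assms]] .
  show "(a, fst (ends e)) \<in> (edge_rel E ends)\<^sup>*" if "(a, snd (ends e)) \<in> (edge_rel E ends)\<^sup>*"
    using rtrancl_into_rtrancl[OF that edge_rel_edge(2)[OF assms]] .
qed

lemma graph_connected_delete_edge:
  assumes con: "graph_connected V E ends"
    and ends_linked: "(fst (ends e), snd (ends e)) \<in> (edge_rel (E - {e}) ends)\<^sup>*"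
  shows "graph_connected V (E - {e}) ends"
proof -
  have "(x, y) \<in> (edge_rel (E - {e}) ends)\<^sup>*" if "(x, y) \<in> edge_rel E ends" for x y
  proof -
    from that obtain e' where e': "e' \<in> E"
      "x = fst (ends e') \<and> y = snd (ends e') \<or> x = snd (ends e') \<and> y = fst (ends e')"
      by (rule edge_relE)
    show ?thesis
    proof (cases "e' = e")
      case True
      then show ?thesis
        using e'(2) ends_linked edge_rel_rtrancl_sym[OF ends_linked] by auto
    next
      case False
      then have "e' \<in> E - {e}" using e'(1) by simp
      then have "(x, y) \<in> edge_rel (E - {e}) ends"
        using e'(2) edge_rel_edge[of e' "E - {e}" ends] by auto
      then show ?thesis by (rule r_into_rtrancl)
    qed
  qed
  then have "edge_rel E ends \<subseteq> (edge_rel (E - {e}) ends)\<^sup>*" by (rule subrelI)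
  then have "(edge_rel E ends)\<^sup>* \<subseteq> (edge_rel (E - {e}) ends)\<^sup>*"
    by (rule rtrancl_subset_rtrancl)
  then show ?thesis using con unfolding graph_connected_edge_rel by blast
qed

lemma delete_edge_reachable_values:
  assumes h: "\<forall>e'\<in>E - {e}. h (fst (ends e')) = h (snd (ends e'))"
    and "(fst (ends e), y) \<in> (edge_rel E ends)\<^sup>*"
  shows "h y = h (fst (ends e)) \<or> h y = h (snd (ends e))"
  using assms(2)
proof (induction rule: rtrancl_induct)
  case (step y w)
  from step.hyps(2) obtain e' where "e' \<in> E"
    "y = fst (ends e') \<and> w = snd (ends e') \<or> y = snd (ends e') \<and> w = fst (ends e')"
    by (rule edge_relE)
  then show ?case
    using h step.IH by (cases "e' = e") auto
qed simp

section \<open>Currents and voltages\<close>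

text \<open>One unit of current enters at y and leaves at z.\<close>
definition demand :: "'v \<Rightarrow> 'v \<Rightarrow> 'v \<Rightarrow> real" where
  "demand z y u = (if u = y then 1 else 0) - (if u = z then 1 else 0)"

lemma sum_mult_demand:
  assumes "finite V" "y \<in> V" "z \<in> V"
  shows "(\<Sum>u\<in>V. K u * demand z y u) = K y - K z"
proof -
  have "(\<Sum>u\<in>V. K u * demand z y u) = (\<Sum>u\<in>V. if u = y then K u else 0) - (\<Sum>u\<in>V. if u = z then K u else 0)"
    unfolding demand_def sum_subtractf[symmetric] by (rule sum.cong) auto
  then show ?thesis using assms by (simp add: sum.delta')
qed

lemma net_current_edge_sum:
  assumes "finite E"
  shows "net_current E ends L f u =
    (\<Sum>e\<in>E. (if fst (ends e) = u then (f u - f (snd (ends e))) / L e else 0)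
           + (if snd (ends e) = u then (f u - f (fst (ends e))) / L e else 0))"
  unfolding net_current_def using assms
  by (simp add: sum.distrib sum.inter_filter)

lemma net_current_diff:
  assumes "finite E"
  shows "net_current E ends L (\<lambda>x. f x - g x) u = net_current E ends L f u - net_current E ends L g u"
  unfolding net_current_edge_sum[OF assms] sum_subtractf[symmetric]
  by (rule sum.cong) (auto simp: diff_divide_distrib)

lemma net_current_scale:
  assumes "finite E"
  shows "net_current E ends L (\<lambda>x. c * f x) u = c * net_current E ends L f u"
  unfolding net_current_edge_sum[OF assms] sum_distrib_left
  by (rule sum.cong) (auto simp: algebra_simps)

lemma net_current_sum:
  assumes "finite E" "finite S"
  shows "net_current E ends L (\<lambda>x. \<Sum>i\<in>S. F i x) u = (\<Sum>i\<in>S. net_current E ends L (F i) u)"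
  unfolding net_current_edge_sum[OF assms(1)]
  by (subst sum.swap, rule sum.cong[OF refl])
    (simp add: sum_subtractf[symmetric] sum_divide_distrib[symmetric] sum.distrib[symmetric])

lemma net_current_zero: "net_current E ends L (\<lambda>_. 0) u = 0"
  unfolding net_current_def by simp

lemma net_current_cong:
  assumes wf: "\<forall>e\<in>E. fst (ends e) \<in> V \<and> snd (ends e) \<in> V" and u: "u \<in> V"
    and eq: "\<forall>x\<in>V. f x = g x + c"
  shows "net_current E ends L f u = net_current E ends L g u"
  unfolding net_current_def using wf u eq
  by (intro arg_cong2[where f="(+)"] sum.cong) auto

lemma net_current_delete_edge:
  assumes fE: "finite E" and e: "e \<in> E"
  shows "net_current E ends L f u = net_current (E - {e}) ends L f u
     + (f (fst (ends e)) - f (snd (ends e))) / L e * demand (snd (ends e)) (fst (ends e)) u"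
proof -
  have "net_current E ends L f u =
    ((if fst (ends e) = u then (f u - f (snd (ends e))) / L e else 0)
           + (if snd (ends e) = u then (f u - f (fst (ends e))) / L e else 0))
    + net_current (E - {e}) ends L f u"
    unfolding net_current_edge_sum[OF fE] net_current_edge_sum[of "E - {e}", OF finite_Diff[OF fE]]
    by (rule sum.remove[OF fE e])
  then show ?thesis by (auto simp: demand_def diff_divide_distrib)
qed

lemma sum_mult_net_current:
  assumes fV: "finite V" and fE: "finite E" and wf: "\<forall>e\<in>E. fst (ends e) \<in> V \<and> snd (ends e) \<in> V"
  shows "(\<Sum>u\<in>V. K u * net_current E ends L (F u) u) =
    (\<Sum>e\<in>E. (K (fst (ends e)) * (F (fst (ends e)) (fst (ends e)) - F (fst (ends e)) (snd (ends e)))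
            + K (snd (ends e)) * (F (snd (ends e)) (snd (ends e)) - F (snd (ends e)) (fst (ends e)))) / L e)"
proof -
  have "(\<Sum>u\<in>V. K u * net_current E ends L (F u) u) =
     (\<Sum>e\<in>E. \<Sum>u\<in>V. (if fst (ends e) = u then K u * (F u u - F u (snd (ends e))) / L e else 0)
           + (if snd (ends e) = u then K u * (F u u - F u (fst (ends e))) / L e else 0))"
    unfolding net_current_edge_sum[OF fE] sum_distrib_left
    by (subst sum.swap) (intro sum.cong refl, auto)
  also have "\<dots> = (\<Sum>e\<in>E. (K (fst (ends e)) * (F (fst (ends e)) (fst (ends e)) - F (fst (ends e)) (snd (ends e)))
            + K (snd (ends e)) * (F (snd (ends e)) (snd (ends e)) - F (snd (ends e)) (fst (ends e)))) / L e)"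
    using wf fV by (intro sum.cong refl) (simp add: sum.distrib sum.delta add_divide_distrib)
  finally show ?thesis .
qed

lemma green_identity:
  assumes fV: "finite V" and fE: "finite E" and wf: "\<forall>e\<in>E. fst (ends e) \<in> V \<and> snd (ends e) \<in> V"
  shows "(\<Sum>u\<in>V. K u * net_current E ends L f u) =
    (\<Sum>e\<in>E. (f (fst (ends e)) - f (snd (ends e))) * (K (fst (ends e)) - K (snd (ends e))) / L e)"
  using sum_mult_net_current[OF fV fE wf, of K L "\<lambda>_. f"]
  by (simp add: algebra_simps)

lemma sum_net_current:
  assumes "finite V" "finite E" "\<forall>e\<in>E. fst (ends e) \<in> V \<and> snd (ends e) \<in> V"
  shows "(\<Sum>u\<in>V. net_current E ends L f u) = 0"
  using green_identity[OF assms, of "\<lambda>_. 1" L f] by simp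

lemma zero_energy_imp_edge_const:
  assumes fV: "finite V" and fE: "finite E" and wf: "\<forall>e\<in>E. fst (ends e) \<in> V \<and> snd (ends e) \<in> V"
    and pos: "\<forall>e\<in>E. L e > 0"
    and energy: "(\<Sum>u\<in>V. h u * net_current E ends L h u) = 0"
  shows "\<forall>e\<in>E. h (fst (ends e)) = h (snd (ends e))"
proof -
  define q where "q e = (h (fst (ends e)) - h (snd (ends e)))\<^sup>2 / L e" for e
  have "(\<Sum>e\<in>E. q e) = 0"
    using energy green_identity[OF fV fE wf, of h L h] by (simp add: q_def power2_eq_square)
  moreover have "\<forall>e\<in>E. 0 \<le> q e" using pos unfolding q_def by (auto intro: divide_nonneg_pos)
  ultimately have zero: "\<forall>e\<in>E. q e = 0" using sum_nonneg_eq_0_iff[OF fE] by blast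
  show ?thesis
  proof
    fix e assume "e \<in> E"
    then have "q e = 0" "L e > 0" using zero pos by auto
    then show "h (fst (ends e)) = h (snd (ends e))" unfolding q_def by simp
  qed
qed

lemma harmonic_imp_const:
  assumes fV: "finite V" and fE: "finite E" and wf: "\<forall>e\<in>E. fst (ends e) \<in> V \<and> snd (ends e) \<in> V"
    and pos: "\<forall>e\<in>E. L e > 0" and con: "graph_connected V E ends"
    and harm: "\<forall>u\<in>V. net_current E ends L h u = 0"
    and x: "x \<in> V" and y: "y \<in> V"
  shows "h x = h y"
proof -
  have "\<forall>e\<in>E. h (fst (ends e)) = h (snd (ends e))"
    using harm by (intro zero_energy_imp_edge_const[OF fV fE wf pos]) simp
  moreover have "(x, y) \<in> (edge_rel E ends)\<^sup>*"
    using con x y unfolding graph_connected_edge_rel by (simp only: Ball_def)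
  ultimately show ?thesis by (rule edge_const_imp_rtrancl_const)
qed

lemma voltage_unique:
  assumes fV: "finite V" and fE: "finite E" and wf: "\<forall>e\<in>E. fst (ends e) \<in> V \<and> snd (ends e) \<in> V"
    and pos: "\<forall>e\<in>E. L e > 0" and con: "graph_connected V E ends" and z: "z \<in> V"
    and laplace: "\<forall>u\<in>V. net_current E ends L f u = demand z y u"
    and ground: "f z = 0" and outside: "\<forall>u. u \<notin> V \<longrightarrow> f u = 0"
  shows "voltage V E ends L z y = f"
  unfolding voltage_def
proof (rule the_equality)
  fix f' assume f': "(\<forall>u\<in>V. net_current E ends L f' u = (if u = y then 1 else 0) - (if u = z then 1 else 0))
      \<and> f' z = 0 \<and> (\<forall>u. u \<notin> V \<longrightarrow> f' u = 0)"
  have harm: "\<forall>u\<in>V. net_current E ends L (\<lambda>x. f' x - f x) u = 0"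
    using f' laplace by (simp add: net_current_diff[OF fE] demand_def)
  show "f' = f"
  proof
    fix x show "f' x = f x"
      using harmonic_imp_const[OF fV fE wf pos con harm _ z, of x] f' ground outside
      by (cases "x \<in> V") auto
  qed
qed (use laplace ground outside in \<open>simp add: demand_def\<close>)

lemma net_current_indicator_expansion:
  assumes fE: "finite E" and fV: "finite V" and wf: "\<forall>e\<in>E. fst (ends e) \<in> V \<and> snd (ends e) \<in> V"
    and u: "u \<in> V"
  shows "net_current E ends L f u = (\<Sum>w\<in>V. net_current E ends L (\<lambda>x. if x = w then 1 else 0) u * f w)"
proof -
  have "net_current E ends L f u = net_current E ends L (\<lambda>x. \<Sum>w\<in>V. f w * (if x = w then 1 else 0)) u"
    by (rule net_current_cong[OF wf u, where c=0]) (simp add: fV if_distrib sum.delta' cong: if_cong)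
  also have "\<dots> = (\<Sum>w\<in>V. f w * net_current E ends L (\<lambda>x. if x = w then 1 else 0) u)"
    by (simp add: net_current_sum[OF fE fV] net_current_scale[OF fE])
  finally show ?thesis by (simp add: mult.commute)
qed

lemma net_current_at_ground:
  assumes fV: "finite V" and fE: "finite E" and wf: "\<forall>e\<in>E. fst (ends e) \<in> V \<and> snd (ends e) \<in> V"
    and z: "z \<in> V" and d: "(\<Sum>u\<in>V. d u) = 0"
    and off_ground: "\<forall>u\<in>V - {z}. net_current E ends L f u = d u"
  shows "\<forall>u\<in>V. net_current E ends L f u = d u"
proof -
  have "(\<Sum>u\<in>V - {z}. net_current E ends L f u) = (\<Sum>u\<in>V - {z}. d u)"
    using off_ground by (intro sum.cong) auto
  then have "net_current E ends L f z + (\<Sum>u\<in>V - {z}. d u) = 0"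
    using sum_net_current[OF fV fE wf, of L f] sum.remove[OF fV z, of "net_current E ends L f"]
    by simp
  moreover have "d z + (\<Sum>u\<in>V - {z}. d u) = 0" using d sum.remove[OF fV z, of d] by simp
  ultimately have "net_current E ends L f z = d z" by simp
  then show ?thesis using off_ground by blast
qed

lemma voltage_exists:
  assumes fV: "finite V" and fE: "finite E" and wf: "\<forall>e\<in>E. fst (ends e) \<in> V \<and> snd (ends e) \<in> V"
    and pos: "\<forall>e\<in>E. L e > 0" and con: "graph_connected V E ends" and z: "z \<in> V"
    and d: "(\<Sum>u\<in>V. d u) = 0"
  shows "\<exists>f. (\<forall>u\<in>V. net_current E ends L f u = d u) \<and> f z = 0 \<and> (\<forall>u. u \<notin> V \<longrightarrow> f u = 0)"
proof -
  define M where "M u w = (if u = z then (if w = z then 1 else 0)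
      else net_current E ends L (\<lambda>x. if x = w then 1 else 0) u)" for u w
  define ext where "ext x y = (if y \<in> V then x y else (0::real))" for x y
  have system: "(\<Sum>w\<in>V. M u w * x w) = (if u = z then x z else net_current E ends L (ext x) u)"
    if u: "u \<in> V" for x u
  proof (cases "u = z")
    case True
    then have "M u w * x w = (if w = z then x w else 0)" for w by (simp add: M_def)
    then show ?thesis using True z fV by (simp add: sum.delta')
  next
    case False
    then show ?thesis
      using net_current_indicator_expansion[OF fE fV wf u, of L "ext x"] by (simp add: M_def ext_def)
  qed
  have "\<exists>x. \<forall>u\<in>V. (\<Sum>w\<in>V. M u w * x w) = (if u = z then 0 else d u)"
  proof (rule square_system_solvable[OF fV])
    fix x assume hx: "\<forall>u\<in>V. (\<Sum>w\<in>V. M u w * x w) = 0"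
    have "net_current E ends L (ext x) u = 0" if "u \<in> V - {z}" for u
      using hx system[of u x] that by auto
    then have "\<forall>u\<in>V. net_current E ends L (ext x) u = 0"
      by (intro net_current_at_ground[OF fV fE wf z, of "\<lambda>_. 0"]) auto
    then have "ext x w = ext x z" if "w \<in> V" for w
      using harmonic_imp_const[OF fV fE wf pos con _ that z] by blast
    moreover have "x z = 0" using hx system z by fastforce
    ultimately show "\<forall>w\<in>V. x w = 0" using z by (simp add: ext_def)
  qed
  then obtain x where hx: "\<forall>u\<in>V. (\<Sum>w\<in>V. M u w * x w) = (if u = z then 0 else d u)" by blast
  have "net_current E ends L (ext x) u = d u" if "u \<in> V - {z}" for u
    using hx system[of u x] that by auto
  then have "\<forall>u\<in>V. net_current E ends L (ext x) u = d u"
    by (intro net_current_at_ground[OF fV fE wf z d]) auto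
  moreover have "x z = 0" using hx system z by fastforce
  ultimately show ?thesis using z by (intro exI[of _ "ext x"]) (auto simp: ext_def)
qed

text \<open>A current can only flow between connected vertices: the indicator of the component of
  the source is constant along edges, so it is orthogonal to every current.\<close>
lemma current_imp_reachable:
  assumes fV: "finite V" and fE: "finite E" and wf: "\<forall>e\<in>E. fst (ends e) \<in> V \<and> snd (ends e) \<in> V"
    and a: "a \<in> V" and b: "b \<in> V" and c: "c \<noteq> 0"
    and current: "\<forall>u\<in>V. net_current E ends L f u = c * demand b a u"
  shows "(a, b) \<in> (edge_rel E ends)\<^sup>*"
proof -
  define K where "K u = (if (a, u) \<in> (edge_rel E ends)\<^sup>* then 1 else 0 :: real)" for u
  have "(\<Sum>u\<in>V. K u * net_current E ends L f u) =
      (\<Sum>e\<in>E. (f (fst (ends e)) - f (snd (ends e))) * (K (fst (ends e)) - K (snd (ends e))) / L e)"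
    by (rule green_identity[OF fV fE wf])
  also have "\<dots> = 0"
  proof (intro sum.neutral ballI)
    fix e assume "e \<in> E"
    then have "K (fst (ends e)) = K (snd (ends e))" by (simp add: K_def reachable_fst_iff_snd)
    then show "(f (fst (ends e)) - f (snd (ends e))) * (K (fst (ends e)) - K (snd (ends e))) / L e = 0"
      by simp
  qed
  finally have "(\<Sum>u\<in>V. (K u * c) * demand b a u) = 0" using current by (simp add: mult.assoc)
  then have "K a * c - K b * c = 0" by (simp only: sum_mult_demand[OF fV a b])
  then have "(K a - K b) * c = 0" by (simp add: algebra_simps)
  then have "K b = 1" using c by (simp add: K_def)
  then show ?thesis by (simp add: K_def split: if_splits)
qed

section \<open>Contraction of an edge\<close>

lemma contract_map_image:
  assumes "fst (ends e) \<noteq> snd (ends e)" "fst (ends e) \<in> V"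
  shows "contract_map ends e ` V = V - {snd (ends e)}"
proof
  show "contract_map ends e ` V \<subseteq> V - {snd (ends e)}"
    using assms by (auto simp: contract_map_def)
  show "V - {snd (ends e)} \<subseteq> contract_map ends e ` V"
    by (auto simp: contract_map_def intro: rev_image_eqI)
qed

lemma graph_connected_contract:
  assumes con: "graph_connected V E ends"
  shows "graph_connected (contract_map ends e ` V) (E - {e})
           (\<lambda>e'. map_prod (contract_map ends e) (contract_map ends e) (ends e'))"
proof -
  let ?m = "contract_map ends e"
  let ?ends = "\<lambda>e'. map_prod ?m ?m (ends e')"
  have lift: "(?m x, ?m y) \<in> (edge_rel (E - {e}) ?ends)\<^sup>*" if "(x, y) \<in> (edge_rel E ends)\<^sup>*" for x y
    using that
  proof (induction rule: rtrancl_induct)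
    case (step y w)
    from step.hyps(2) obtain e' where e': "e' \<in> E"
      "y = fst (ends e') \<and> w = snd (ends e') \<or> y = snd (ends e') \<and> w = fst (ends e')"
      by (rule edge_relE)
    show ?case
    proof (cases "e' = e")
      case True
      then have "?m w = ?m y" using e'(2) by (auto simp: contract_map_def)
      then show ?thesis using step.IH by simp
    next
      case False
      then have "(?m y, ?m w) \<in> edge_rel (E - {e}) ?ends"
        using e' edge_rel_edge[of e' "E - {e}" ?ends] by auto
      then show ?thesis by (rule rtrancl_into_rtrancl[OF step.IH])
    qed
  qed simp
  show ?thesis unfolding graph_connected_edge_rel
  proof (intro ballI)
    fix x' y' assume "x' \<in> ?m ` V" "y' \<in> ?m ` V"
    then obtain x y where xy: "x \<in> V" "y \<in> V" "x' = ?m x" "y' = ?m y" by blast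
    then have "(x, y) \<in> (edge_rel E ends)\<^sup>*"
      using con unfolding graph_connected_edge_rel by (simp only: Ball_def)
    then show "(x', y') \<in> (edge_rel (E - {e}) ?ends)\<^sup>*" using xy(3,4) lift by simp
  qed
qed

lemma net_current_contract:
  assumes fV: "finite V" and fE: "finite E" and wf: "\<forall>e\<in>E. fst (ends e) \<in> V \<and> snd (ends e) \<in> V"
    and H: "\<forall>u\<in>V. H (m u) = h u + k"
  shows "net_current E (\<lambda>e. map_prod m m (ends e)) L H w
    = (\<Sum>u\<in>V. (if m u = w then 1 else 0) * net_current E ends L h u)"
proof -
  let ?K = "\<lambda>u. if m u = w then 1 else 0 :: real"
  have "net_current E (\<lambda>e. map_prod m m (ends e)) L H w
      = (\<Sum>e\<in>E. (?K (fst (ends e)) * (h (fst (ends e)) - h (snd (ends e)))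
                 + ?K (snd (ends e)) * (h (snd (ends e)) - h (fst (ends e)))) / L e)"
    unfolding net_current_edge_sum[OF fE] using wf H
    by (intro sum.cong refl) (auto simp: add_divide_distrib diff_divide_distrib)
  also have "\<dots> = (\<Sum>u\<in>V. ?K u * net_current E ends L h u)"
    by (rule sum_mult_net_current[OF fV fE wf, of ?K L "\<lambda>_. h", symmetric])
  finally show ?thesis .
qed

lemma eff_res_contract_potential:
  assumes fV: "finite V" and fE: "finite E" and wf: "\<forall>e\<in>E. fst (ends e) \<in> V \<and> snd (ends e) \<in> V"
    and pos: "\<forall>e\<in>E. L e > 0" and con: "graph_connected V E ends"
    and e: "e \<in> E" and x: "x \<in> V" and y: "y \<in> V"
    and h_ends: "h (fst (ends e)) = h (snd (ends e))"
    and current: "\<forall>u\<in>V. net_current E ends L h u = demand y x u + c * demand (snd (ends e)) (fst (ends e)) u"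
  shows "eff_res (contract_map ends e ` V) (E - {e})
           (\<lambda>e'. map_prod (contract_map ends e) (contract_map ends e) (ends e')) L
           (contract_map ends e x) (contract_map ends e y) = h x - h y"
proof -
  let ?m = "contract_map ends e" and ?a = "fst (ends e)" and ?b = "snd (ends e)"
  let ?V = "?m ` V" and ?ends = "\<lambda>e'. map_prod ?m ?m (ends e')"
  have a: "?a \<in> V" and b: "?b \<in> V" using e wf by auto
  have wf': "finite (E - {e})" "\<forall>e'\<in>E - {e}. fst (ends e') \<in> V \<and> snd (ends e') \<in> V"
    "\<forall>e'\<in>E - {e}. L e' > 0"
    using fE wf pos by auto
  have h_m: "h (?m u) = h u" for u using h_ends by (simp add: contract_map_def)
  have current': "net_current (E - {e}) ends L h u = demand y x u + c * demand ?b ?a u"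
    if "u \<in> V" for u
    using current that net_current_delete_edge[OF fE e, of ends L h u] h_ends by simp
  define H where "H w = (if w \<in> ?V then h w - h y else 0)" for w
  have "voltage ?V (E - {e}) ?ends L (?m y) (?m x) = H"
  proof (rule voltage_unique[OF finite_imageI[OF fV] wf'(1) _ wf'(3) graph_connected_contract[OF con]])
    show "\<forall>w\<in>?V. net_current (E - {e}) ?ends L H w = demand (?m y) (?m x) w"
    proof
      fix w assume "w \<in> ?V"
      let ?K = "\<lambda>u. if ?m u = w then 1 else 0 :: real"
      have "net_current (E - {e}) ?ends L H w = (\<Sum>u\<in>V. ?K u * net_current (E - {e}) ends L h u)"
        by (rule net_current_contract[OF fV wf'(1,2), where k = "- h y"]) (simp add: H_def h_m)
      also have "\<dots> = (\<Sum>u\<in>V. ?K u * demand y x u) + c * (\<Sum>u\<in>V. ?K u * demand ?b ?a u)"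
        by (simp add: current' sum_distrib_left sum.distrib algebra_simps)
      also have "\<dots> = demand (?m y) (?m x) w"
        using sum_mult_demand[OF fV x y, of ?K] sum_mult_demand[OF fV a b, of ?K]
        by (simp add: demand_def contract_map_def)
      finally show "net_current (E - {e}) ?ends L H w = demand (?m y) (?m x) w" .
    qed
  qed (use wf y in \<open>auto simp: H_def h_m\<close>)
  then show ?thesis unfolding eff_res_def using x by (simp add: H_def h_m)
qed

lemma sum_sum_remove_twin:
  fixes f :: "'v \<Rightarrow> 'v \<Rightarrow> real"
  assumes fV: "finite V" and a: "a \<in> V" and b: "b \<in> V"
    and sym: "\<And>x y. x \<in> V \<Longrightarrow> y \<in> V \<Longrightarrow> f x y = f y x"
    and twin: "\<And>x. x \<in> V \<Longrightarrow> f x b = f x a" and diag: "f a a = 0"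
  shows "(\<Sum>x\<in>V - {b}. \<Sum>y\<in>V - {b}. f x y) = (\<Sum>x\<in>V. \<Sum>y\<in>V. f x y) - 2 * (\<Sum>x\<in>V. f x a)"
proof -
  have f_ba: "f b a = 0" using sym[OF b a] twin[OF a] diag by simp
  have "(\<Sum>x\<in>V. \<Sum>y\<in>V. f x y) = (\<Sum>x\<in>V. f x a) + (\<Sum>x\<in>V. \<Sum>y\<in>V - {b}. f x y)"
    by (simp add: sum.remove[OF fV b] twin sum.distrib cong: sum.cong)
  also have "(\<Sum>x\<in>V. \<Sum>y\<in>V - {b}. f x y)
      = (\<Sum>y\<in>V - {b}. f b y) + (\<Sum>x\<in>V - {b}. \<Sum>y\<in>V - {b}. f x y)"
    by (rule sum.remove[OF fV b])
  also have "(\<Sum>y\<in>V - {b}. f b y) = (\<Sum>y\<in>V - {b}. f y a)"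
    using sym twin b by (intro sum.cong) auto
  also have "\<dots> = (\<Sum>x\<in>V. f x a)"
    using sum.remove[OF fV b, of "\<lambda>x. f x a"] f_ba by simp
  finally show ?thesis by simp
qed

section \<open>The Green function of a grounded graph\<close>

text \<open>A, B, C stand for green a a, green b b, green a b, so that psi e a = A - C and
  psi e b = C - B.\<close>
lemma edge_contribution_algebra:
  fixes A B C sa sb T v M :: real
  assumes "M > 0"
  shows "- ((A - C - (C - B)) / M) * (T + v * A - 2 * sa) - 2 * (A - C) * (sa - sb) / M
       + v * (A - C)\<^sup>2 / M
       - v * ((1/4) * (M * ((A - C - (C - B)) / M)\<^sup>2) + (3/4) * ((A - C + (C - B))\<^sup>2 / M))
     = - ((A - C - (C - B)) / M) * T - v * ((A * (A - C) + B * (B - C)) / M)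
       + 2 * ((sa * (A - C) + sb * (B - C)) / M) - 2 * ((A - B) * (sa - sb) / M)"
  using assms by (simp add: field_simps power2_eq_square)

locale grounded_graph =
  fixes V :: "'v set" and E :: "'e set" and ends :: "'e \<Rightarrow> 'v \<times> 'v" and L :: "'e \<Rightarrow> real"
    and z :: 'v
  assumes fin_V: "finite V" and fin_E: "finite E"
    and ends_V: "\<forall>e\<in>E. fst (ends e) \<in> V \<and> snd (ends e) \<in> V"
    and pos: "\<forall>e\<in>E. L e > 0" and con: "graph_connected V E ends" and z_V: "z \<in> V"
begin

definition green :: "'v \<Rightarrow> 'v \<Rightarrow> real" where
  "green x y = voltage V E ends L z y x"

lemma
  assumes y: "y \<in> V"
  shows net_current_green: "\<forall>u\<in>V. net_current E ends L (\<lambda>x. green x y) u = demand z y u"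
    and green_ground: "green z y = 0"
proof -
  have "(\<Sum>u\<in>V. demand z y u) = 0" using sum_mult_demand[OF fin_V y z_V, of "\<lambda>_. 1"] by simp
  then obtain f where f: "\<forall>u\<in>V. net_current E ends L f u = demand z y u" "f z = 0"
      "\<forall>u. u \<notin> V \<longrightarrow> f u = 0"
    using voltage_exists[OF fin_V fin_E ends_V pos con z_V] by blast
  have "voltage V E ends L z y = f" by (rule voltage_unique[OF fin_V fin_E ends_V pos con z_V f])
  then have green_f: "green x y = f x" for x unfolding green_def by simp
  show "\<forall>u\<in>V. net_current E ends L (\<lambda>x. green x y) u = demand z y u"
    using f(1) by (simp add: green_f)
  show "green z y = 0" using f(2) by (simp add: green_f)
qed

lemma green_ground_source: "green x z = 0"
proof -
  have "voltage V E ends L z z = (\<lambda>_. 0)"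
    by (rule voltage_unique[OF fin_V fin_E ends_V pos con z_V]) (auto simp: net_current_zero demand_def)
  then show ?thesis unfolding green_def by simp
qed

text \<open>Testing the equation of one Green function against another evaluates the other one.\<close>
lemma green_pairing:
  assumes x: "x \<in> V" and y: "y \<in> V"
  shows "(\<Sum>e\<in>E. (green (fst (ends e)) x - green (snd (ends e)) x)
                 * (green (fst (ends e)) y - green (snd (ends e)) y) / L e) = green x y"
proof -
  have "(\<Sum>e\<in>E. (green (fst (ends e)) x - green (snd (ends e)) x)
                 * (green (fst (ends e)) y - green (snd (ends e)) y) / L e)
      = (\<Sum>u\<in>V. green u y * net_current E ends L (\<lambda>u. green u x) u)"
    by (rule green_identity[OF fin_V fin_E ends_V, symmetric])
  also have "\<dots> = green x y"
    using net_current_green[OF x] sum_mult_demand[OF fin_V x z_V, of "\<lambda>u. green u y"]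
      green_ground[OF y] by simp
  finally show ?thesis .
qed

lemma green_sym: "x \<in> V \<Longrightarrow> y \<in> V \<Longrightarrow> green x y = green y x"
  using green_pairing[of x y] green_pairing[of y x] by (simp add: mult.commute)

definition res :: "'v \<Rightarrow> 'v \<Rightarrow> real" where
  "res x y = green x x + green y y - 2 * green x y"

lemma res_sym: "x \<in> V \<Longrightarrow> y \<in> V \<Longrightarrow> res x y = res y x"
  unfolding res_def using green_sym by simp

lemma eff_res_eq_res:
  assumes x: "x \<in> V" and y: "y \<in> V"
  shows "eff_res V E ends L x y = res x y"
proof -
  define f where "f u = (if u \<in> V then green u x - green u y - (green y x - green y y) else 0)" for u
  have "voltage V E ends L y x = f"
  proof (rule voltage_unique[OF fin_V fin_E ends_V pos con y])
    show "\<forall>u\<in>V. net_current E ends L f u = demand y x u"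
    proof
      fix u assume u: "u \<in> V"
      have "net_current E ends L f u = net_current E ends L (\<lambda>w. green w x - green w y) u"
        by (rule net_current_cong[OF ends_V u, where c="-(green y x - green y y)"]) (simp add: f_def)
      also have "\<dots> = demand z x u - demand z y u"
        using net_current_green[OF x] net_current_green[OF y] u by (simp add: net_current_diff[OF fin_E])
      also have "\<dots> = demand y x u" by (simp add: demand_def)
      finally show "net_current E ends L f u = demand y x u" .
    qed
  qed (simp_all add: f_def y)
  then show ?thesis unfolding eff_res_def res_def f_def using x y green_sym[OF x y] by simp
qed

lemma kirchhoff_index_eq: "kirchhoff_index V E ends L = (1/2) * (\<Sum>x\<in>V. \<Sum>y\<in>V. res x y)"
  unfolding kirchhoff_index_def using eff_res_eq_res by (simp cong: sum.cong)

text \<open>psi e is the potential of a unit current entering at the first end of e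
  and leaving at the second one.\<close>
definition psi :: "'e \<Rightarrow> 'v \<Rightarrow> real" where
  "psi e x = green x (fst (ends e)) - green x (snd (ends e))"

lemma psi_ground: "e \<in> E \<Longrightarrow> psi e z = 0"
  unfolding psi_def using green_ground ends_V by simp

lemma psi_eq: "e \<in> E \<Longrightarrow> x \<in> V \<Longrightarrow> psi e x = green (fst (ends e)) x - green (snd (ends e)) x"
  unfolding psi_def using green_sym ends_V by simp

lemma net_current_psi:
  assumes e: "e \<in> E" and u: "u \<in> V"
  shows "net_current E ends L (psi e) u = demand (snd (ends e)) (fst (ends e)) u"
proof -
  have "net_current E ends L (psi e) u = demand z (fst (ends e)) u - demand z (snd (ends e)) u"
    unfolding psi_def using net_current_green ends_V e u by (simp add: net_current_diff[OF fin_E])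
  then show ?thesis by (simp add: demand_def)
qed

lemma sum_edges_psi_mult:
  assumes x: "x \<in> V" and y: "y \<in> V"
  shows "(\<Sum>e\<in>E. psi e x * psi e y / L e) = green x y"
  using green_pairing[OF x y] by (simp add: psi_eq x y cong: sum.cong)

lemma sum_edges_psi_diff_sq:
  assumes x: "x \<in> V" and y: "y \<in> V"
  shows "(\<Sum>e\<in>E. (psi e x - psi e y)\<^sup>2 / L e) = res x y"
proof -
  have "(\<Sum>e\<in>E. (psi e x - psi e y)\<^sup>2 / L e) = (\<Sum>e\<in>E. psi e x * psi e x / L e)
      + (\<Sum>e\<in>E. psi e y * psi e y / L e) - 2 * (\<Sum>e\<in>E. psi e x * psi e y / L e)"
    by (simp add: sum.distrib sum_subtractf sum_distrib_left power2_eq_square diff_divide_distrib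
        add_divide_distrib algebra_simps)
  then show ?thesis unfolding res_def by (simp add: sum_edges_psi_mult x y)
qed

text \<open>For each end u of e, the current through e away from u when a unit current flows from u
  to the ground, weighted by K u.\<close>
definition weighted_flux :: "('v \<Rightarrow> real) \<Rightarrow> 'e \<Rightarrow> real" where
  "weighted_flux K e =
     (K (fst (ends e)) * (green (fst (ends e)) (fst (ends e)) - green (fst (ends e)) (snd (ends e)))
      + K (snd (ends e)) * (green (snd (ends e)) (snd (ends e)) - green (fst (ends e)) (snd (ends e))))
     / L e"

lemma sum_weighted_flux: "(\<Sum>e\<in>E. weighted_flux K e) = (\<Sum>u\<in>V. K u) - K z"
proof -
  have "(\<Sum>e\<in>E. weighted_flux K e) = (\<Sum>u\<in>V. K u * net_current E ends L (\<lambda>x. green x u) u)"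
    unfolding weighted_flux_def sum_mult_net_current[OF fin_V fin_E ends_V]
    using ends_V green_sym by (intro sum.cong) auto
  also have "\<dots> = (\<Sum>u\<in>V. K u - (if u = z then K u else 0))"
    using net_current_green by (intro sum.cong) (auto simp: demand_def)
  also have "\<dots> = (\<Sum>u\<in>V. K u) - K z"
    using fin_V z_V by (simp add: sum_subtractf sum.delta')
  finally show ?thesis .
qed

definition edge_current :: "'e \<Rightarrow> real" where
  "edge_current e = (psi e (fst (ends e)) - psi e (snd (ends e))) / L e"

lemma sum_edge_current: "(\<Sum>e\<in>E. edge_current e) = real (card V) - 1"
proof -
  have "edge_current e = weighted_flux (\<lambda>_. 1) e" if "e \<in> E" for e
    using that ends_V green_sym by (simp add: edge_current_def weighted_flux_def psi_def add_divide_distrib)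
  then show ?thesis using sum_weighted_flux[of "\<lambda>_. 1"] by simp
qed

definition green_trace :: real where
  "green_trace = (\<Sum>x\<in>V. green x x)"

definition green_row :: "'v \<Rightarrow> real" where
  "green_row u = (\<Sum>x\<in>V. green u x)"

definition green_total :: real where
  "green_total = (\<Sum>x\<in>V. green_row x)"

lemma sum_weighted_flux_diag: "(\<Sum>e\<in>E. weighted_flux (\<lambda>u. green u u) e) = green_trace"
  using sum_weighted_flux green_ground_source[of z] by (simp add: green_trace_def)

lemma sum_weighted_flux_row: "(\<Sum>e\<in>E. weighted_flux green_row e) = green_total"
  using sum_weighted_flux green_ground by (simp add: green_total_def green_row_def)

lemma net_current_green_row:
  assumes u: "u \<in> V"
  shows "net_current E ends L green_row u = 1 - real (card V) * (if u = z then 1 else 0)"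
proof -
  have "net_current E ends L green_row u = (\<Sum>x\<in>V. net_current E ends L (\<lambda>w. green w x) u)"
    unfolding green_row_def by (rule net_current_sum[OF fin_E fin_V])
  also have "\<dots> = (\<Sum>x\<in>V. demand z x u)" using net_current_green u by simp
  also have "\<dots> = 1 - real (card V) * (if u = z then 1 else 0)"
    using u fin_V by (simp add: demand_def sum_subtractf)
  finally show ?thesis .
qed

lemma sum_edges_diag_row:
  "(\<Sum>e\<in>E. (green (fst (ends e)) (fst (ends e)) - green (snd (ends e)) (snd (ends e)))
          * (green_row (fst (ends e)) - green_row (snd (ends e))) / L e) = green_trace"
proof -
  have "(\<Sum>e\<in>E. (green (fst (ends e)) (fst (ends e)) - green (snd (ends e)) (snd (ends e)))
          * (green_row (fst (ends e)) - green_row (snd (ends e))) / L e)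
      = (\<Sum>u\<in>V. green u u * net_current E ends L green_row u)"
    by (simp add: green_identity[OF fin_V fin_E ends_V] mult.commute)
  also have "\<dots> = (\<Sum>u\<in>V. green u u - (if u = z then real (card V) * green u u else 0))"
    by (intro sum.cong refl) (simp add: net_current_green_row algebra_simps)
  also have "\<dots> = green_trace"
    using fin_V z_V green_ground_source[of z] by (simp add: green_trace_def sum_subtractf sum.delta')
  finally show ?thesis .
qed

lemma kirchhoff_index_green: "kirchhoff_index V E ends L = real (card V) * green_trace - green_total"
proof -
  have "(\<Sum>x\<in>V. \<Sum>y\<in>V. res x y) = real (card V) * green_trace + real (card V) * green_trace
      - 2 * green_total"
    unfolding res_def green_trace_def green_total_def green_row_def
    by (simp add: sum.distrib sum_subtractf sum_distrib_left)
  then show ?thesis unfolding kirchhoff_index_eq by simp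
qed

lemma delete_edge_wf:
  "finite (E - {e})" "\<forall>e'\<in>E - {e}. fst (ends e') \<in> V \<and> snd (ends e') \<in> V"
  "\<forall>e'\<in>E - {e}. L e' > 0"
  using fin_E ends_V pos by auto

lemma net_current_psi_delete:
  assumes e: "e \<in> E" and u: "u \<in> V"
  shows "net_current (E - {e}) ends L (psi e) u
    = (1 - edge_current e) * demand (snd (ends e)) (fst (ends e)) u"
  using net_current_delete_edge[OF fin_E e, of ends L "psi e" u] net_current_psi[OF e u]
  unfolding edge_current_def by (simp add: algebra_simps)

lemma edge_terms_bridge:
  assumes e: "e \<in> E" and bridge: "is_bridge V E ends e"
  shows "contr_coef V E ends L e = edge_current e"
    and "y_term1 V E ends L e = L e * (edge_current e)\<^sup>2"
    and "y_term2 V E ends L e z = (psi e (fst (ends e)) + psi e (snd (ends e)))\<^sup>2 / L e"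
proof -
  let ?a = "fst (ends e)" and ?b = "snd (ends e)"
  have a: "?a \<in> V" and b: "?b \<in> V" and Le: "L e > 0" using e ends_V pos by auto
  have disconnected: "\<not> graph_connected V (E - {e}) ends"
    using bridge unfolding is_bridge_def by simp
  have current: "edge_current e = 1"
  proof (rule ccontr)
    assume "edge_current e \<noteq> 1"
    then have "(?a, ?b) \<in> (edge_rel (E - {e}) ends)\<^sup>*"
      using net_current_psi_delete[OF e]
      by (intro current_imp_reachable[OF fin_V delete_edge_wf(1,2) a b]) auto
    then show False using graph_connected_delete_edge[OF con] disconnected by blast
  qed
  have "\<forall>e'\<in>E - {e}. psi e (fst (ends e')) = psi e (snd (ends e'))"
    using net_current_psi_delete[OF e] current
    by (intro zero_energy_imp_edge_const[OF fin_V delete_edge_wf]) simp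
  moreover have "(?a, z) \<in> (edge_rel E ends)\<^sup>*"
    using con a z_V unfolding graph_connected_edge_rel by (simp only: Ball_def)
  ultimately have "psi e z = psi e ?a \<or> psi e z = psi e ?b"
    by (rule delete_edge_reachable_values)
  then have "psi e ?a = 0 \<or> psi e ?b = 0" using psi_ground[OF e] by auto
  moreover have "psi e ?a - psi e ?b = L e" using current Le unfolding edge_current_def by simp
  ultimately have "psi e ?a + psi e ?b = L e \<or> psi e ?a + psi e ?b = - L e" by auto
  then have "(psi e ?a + psi e ?b)\<^sup>2 = (L e)\<^sup>2" by auto
  then show "contr_coef V E ends L e = edge_current e"
    and "y_term1 V E ends L e = L e * (edge_current e)\<^sup>2"
    and "y_term2 V E ends L e z = (psi e ?a + psi e ?b)\<^sup>2 / L e"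
    unfolding contr_coef_def y_term1_def y_term2_def using bridge current Le
    by (simp_all add: power2_eq_square)
qed

lemma edge_current_ne_1:
  assumes e: "e \<in> E" and con': "graph_connected V (E - {e}) ends"
  shows "edge_current e \<noteq> 1"
proof
  assume c: "edge_current e = 1"
  have "psi e (fst (ends e)) = psi e (snd (ends e))"
    using net_current_psi_delete[OF e] c e ends_V
    by (intro harmonic_imp_const[OF fin_V delete_edge_wf con']) simp_all
  with c show False by (simp add: edge_current_def)
qed

text \<open>Without e, psi e is the potential of a current 1 - edge_current e from the first end of e
  to the second one.\<close>
lemma voltage_delete_edge:
  assumes e: "e \<in> E" and con': "graph_connected V (E - {e}) ends" and w: "w \<in> V"
    and s: "\<forall>u. demand w y u = s * demand (snd (ends e)) (fst (ends e)) u"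
  shows "voltage V (E - {e}) ends L w y
    = (\<lambda>u. if u \<in> V then s * (psi e u - psi e w) / (1 - edge_current e) else 0)"
proof (rule voltage_unique[OF fin_V delete_edge_wf con' w])
  let ?c = "edge_current e"
  let ?f = "\<lambda>u. if u \<in> V then s * (psi e u - psi e w) / (1 - ?c) else 0"
  show "\<forall>u\<in>V. net_current (E - {e}) ends L ?f u = demand w y u"
  proof
    fix u assume u: "u \<in> V"
    have "net_current (E - {e}) ends L ?f u = net_current (E - {e}) ends L (\<lambda>x. (s / (1 - ?c)) * psi e x) u"
      by (rule net_current_cong[OF delete_edge_wf(2) u, where c = "- s / (1 - ?c) * psi e w"])
        (simp add: diff_divide_distrib right_diff_distrib)
    also have "\<dots> = (s / (1 - ?c)) * ((1 - ?c) * demand (snd (ends e)) (fst (ends e)) u)"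
      by (simp only: net_current_scale[OF delete_edge_wf(1)] net_current_psi_delete[OF e u])
    also have "\<dots> = demand w y u" using edge_current_ne_1[OF e con'] s by simp
    finally show "net_current (E - {e}) ends L ?f u = demand w y u" .
  qed
qed (simp_all add: w)

lemma edge_terms_non_bridge:
  assumes e: "e \<in> E" and not_bridge: "\<not> is_bridge V E ends e"
  shows "contr_coef V E ends L e = edge_current e"
    and "y_term1 V E ends L e = L e * (edge_current e)\<^sup>2"
    and "y_term2 V E ends L e z = (psi e (fst (ends e)) + psi e (snd (ends e)))\<^sup>2 / L e"
proof -
  let ?a = "fst (ends e)" and ?b = "snd (ends e)" and ?c = "edge_current e"
  have a: "?a \<in> V" and b: "?b \<in> V" and Le: "L e > 0" using e ends_V pos by auto
  have con': "graph_connected V (E - {e}) ends" using not_bridge e unfolding is_bridge_def by simp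
  have c: "?c \<noteq> 1" by (rule edge_current_ne_1[OF e con'])
  have V_ba: "voltage V (E - {e}) ends L ?b ?a = (\<lambda>u. if u \<in> V then 1 * (psi e u - psi e ?b) / (1 - ?c) else 0)"
    by (rule voltage_delete_edge[OF e con' b]) simp
  have V_ab: "voltage V (E - {e}) ends L ?a ?b = (\<lambda>u. if u \<in> V then -1 * (psi e u - psi e ?a) / (1 - ?c) else 0)"
    by (rule voltage_delete_edge[OF e con' a]) (simp add: demand_def)
  have R: "R_del V E ends L e = ?c * L e / (1 - ?c)"
    unfolding R_del_def eff_res_def V_ba using a Le by (simp add: edge_current_def)
  have R_ab: "R_a V E ends L e z - R_b V E ends L e z = (psi e ?a + psi e ?b) / (1 - ?c)"
    unfolding R_a_def R_b_def V_ab V_ba using z_V psi_ground[OF e] by (simp add: add_divide_distrib)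
  have L_plus_R: "L e + R_del V E ends L e = L e / (1 - ?c)"
    using c unfolding R by (simp add: field_simps)
  have ratio: "R_del V E ends L e / (L e + R_del V E ends L e) = ?c"
    unfolding L_plus_R using c Le by (simp add: R field_simps)
  show "contr_coef V E ends L e = ?c" unfolding contr_coef_def using not_bridge ratio by simp
  have "y_term1 V E ends L e = L e * (R_del V E ends L e / (L e + R_del V E ends L e))\<^sup>2"
    unfolding y_term1_def using not_bridge by (simp add: power_divide)
  then show "y_term1 V E ends L e = L e * ?c\<^sup>2" by (simp only: ratio)
  have "y_term2 V E ends L e z
      = L e * (((psi e ?a + psi e ?b) / (1 - ?c)) / (L e / (1 - ?c)))\<^sup>2"
    unfolding y_term2_def L_plus_R R_ab using not_bridge by (simp add: power_divide)
  also have "((psi e ?a + psi e ?b) / (1 - ?c)) / (L e / (1 - ?c)) = (psi e ?a + psi e ?b) / L e"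
    using c by simp
  finally show "y_term2 V E ends L e z = (psi e ?a + psi e ?b)\<^sup>2 / L e"
    using Le by (simp add: power2_eq_square)
qed

lemma edge_terms:
  assumes e: "e \<in> E"
  shows contr_coef_eq: "contr_coef V E ends L e = edge_current e"
    and y_term1_eq: "y_term1 V E ends L e = L e * (edge_current e)\<^sup>2"
    and y_term2_eq: "y_term2 V E ends L e z = (psi e (fst (ends e)) + psi e (snd (ends e)))\<^sup>2 / L e"
  using edge_terms_bridge[OF e] edge_terms_non_bridge[OF e]
  by (cases "is_bridge V E ends e"; blast)+

lemma psi_ends_ne:
  assumes e: "e \<in> E" and not_loop: "fst (ends e) \<noteq> snd (ends e)"
  shows "psi e (fst (ends e)) \<noteq> psi e (snd (ends e))"
proof
  let ?a = "fst (ends e)" and ?b = "snd (ends e)"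
  assume eq: "psi e ?a = psi e ?b"
  have a: "?a \<in> V" and b: "?b \<in> V" using e ends_V by auto
  have "(\<Sum>u\<in>V. psi e u * net_current E ends L (psi e) u) = psi e ?a - psi e ?b"
    using net_current_psi[OF e] sum_mult_demand[OF fin_V a b, of "psi e"] by simp
  then have const: "\<forall>e'\<in>E. psi e (fst (ends e')) = psi e (snd (ends e'))"
    using eq by (intro zero_energy_imp_edge_const[OF fin_V fin_E ends_V pos]) simp
  have "psi e x = psi e ?a" if x: "x \<in> V" for x
  proof -
    have "(?a, x) \<in> (edge_rel E ends)\<^sup>*"
      using con a x unfolding graph_connected_edge_rel by (simp only: Ball_def)
    then show ?thesis by (rule edge_const_imp_rtrancl_const[OF const, symmetric])
  qed
  then have "net_current E ends L (psi e) ?a = net_current E ends L (\<lambda>_. 0) ?a"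
    by (intro net_current_cong[OF ends_V a, where c = "psi e ?a"]) simp
  then show False using net_current_psi[OF e a] not_loop by (simp add: net_current_zero demand_def)
qed

text \<open>Subtracting a multiple of psi e makes the potential of a unit current from x to y
  agree at both ends of e, so that it descends to the contracted graph.\<close>
lemma eff_res_contract:
  assumes e: "e \<in> E" and not_loop: "fst (ends e) \<noteq> snd (ends e)" and x: "x \<in> V" and y: "y \<in> V"
  shows "eff_res (contract_map ends e ` V) (E - {e})
           (\<lambda>e'. map_prod (contract_map ends e) (contract_map ends e) (ends e')) L
           (contract_map ends e x) (contract_map ends e y)
         = res x y - (psi e x - psi e y)\<^sup>2 / (psi e (fst (ends e)) - psi e (snd (ends e)))"
proof -
  let ?a = "fst (ends e)" and ?b = "snd (ends e)"
  define \<delta> where "\<delta> = psi e ?a - psi e ?b"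
  have \<delta>: "\<delta> \<noteq> 0" unfolding \<delta>_def using psi_ends_ne[OF e not_loop] by simp
  define s where "s = (psi e x - psi e y) / \<delta>"
  define h where "h u = green u x - green u y - s * psi e u" for u
  have "h ?a - h ?b = (psi e x - psi e y) - s * \<delta>"
    using psi_eq[OF e x] psi_eq[OF e y] by (simp add: h_def \<delta>_def algebra_simps)
  then have h_ends: "h ?a = h ?b" using \<delta> by (simp add: s_def)
  have "\<forall>u\<in>V. net_current E ends L h u = demand y x u + (- s) * demand ?b ?a u"
    unfolding h_def using net_current_green[OF x] net_current_green[OF y] net_current_psi[OF e]
    by (simp add: net_current_diff[OF fin_E] net_current_scale[OF fin_E] demand_def)
  then have "eff_res (contract_map ends e ` V) (E - {e})
        (\<lambda>e'. map_prod (contract_map ends e) (contract_map ends e) (ends e')) L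
        (contract_map ends e x) (contract_map ends e y) = h x - h y"
    by (rule eff_res_contract_potential[OF fin_V fin_E ends_V pos con e x y h_ends])
  also have "\<dots> = res x y - (psi e x - psi e y)\<^sup>2 / \<delta>"
    using green_sym[OF x y] \<delta> by (simp add: h_def s_def res_def power2_eq_square field_simps)
  finally show ?thesis unfolding \<delta>_def .
qed

lemma kf_contracted_eq:
  assumes e: "e \<in> E" and not_loop: "fst (ends e) \<noteq> snd (ends e)"
  defines "rb x y \<equiv> res x y - (psi e x - psi e y)\<^sup>2 / (psi e (fst (ends e)) - psi e (snd (ends e)))"
  shows "kf_contracted V E ends L e
    = (1/2) * (\<Sum>x\<in>V. \<Sum>y\<in>V. rb x y) - (\<Sum>x\<in>V. rb x (fst (ends e)))"
proof -
  let ?m = "contract_map ends e" and ?a = "fst (ends e)" and ?b = "snd (ends e)"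
  let ?R = "eff_res (?m ` V) (E - {e}) (\<lambda>e'. map_prod ?m ?m (ends e')) L"
  have a: "?a \<in> V" and b: "?b \<in> V" using e ends_V by auto
  have R: "?R (?m x) (?m y) = rb x y" if "x \<in> V" "y \<in> V" for x y
    unfolding rb_def using eff_res_contract[OF e not_loop that] .
  have "kf_contracted V E ends L e = (1/2) * (\<Sum>x\<in>V - {?b}. \<Sum>y\<in>V - {?b}. ?R x y)"
    unfolding kf_contracted_def kirchhoff_index_def contract_map_image[of ends e V, OF not_loop a] ..
  also have "\<dots> = (1/2) * (\<Sum>x\<in>V - {?b}. \<Sum>y\<in>V - {?b}. rb x y)"
  proof (intro arg_cong2[where f = "(*)"] sum.cong refl)
    fix x y assume x: "x \<in> V - {?b}" and y: "y \<in> V - {?b}"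
    then have "?m x = x" "?m y = y" by (auto simp: contract_map_def)
    then show "?R x y = rb x y" using R[of x y] x y by simp
  qed
  also have "(\<Sum>x\<in>V - {?b}. \<Sum>y\<in>V - {?b}. rb x y) = (\<Sum>x\<in>V. \<Sum>y\<in>V. rb x y) - 2 * (\<Sum>x\<in>V. rb x ?a)"
  proof (rule sum_sum_remove_twin[OF fin_V a b])
    show "rb x y = rb y x" if "x \<in> V" "y \<in> V" for x y
      using res_sym[OF that] by (simp add: rb_def power2_commute)
    show "rb x ?b = rb x ?a" if "x \<in> V" for x
      using R[OF that a] R[OF that b] by (simp add: contract_map_def[of ends e ?a] contract_map_def[of ends e ?b])
    show "rb ?a ?a = 0" by (simp add: rb_def res_def)
  qed
  finally show ?thesis by simp
qed

lemma contr_coef_mult_kf_contracted: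
  assumes e: "e \<in> E"
  shows "contr_coef V E ends L e * kf_contracted V E ends L e
    = edge_current e * kirchhoff_index V E ends L - edge_current e * (\<Sum>x\<in>V. res x (fst (ends e)))
      - (1/2) * (\<Sum>x\<in>V. \<Sum>y\<in>V. (psi e x - psi e y)\<^sup>2 / L e)
      + (\<Sum>x\<in>V. (psi e x - psi e (fst (ends e)))\<^sup>2 / L e)"
proof (cases "fst (ends e) = snd (ends e)")
  case True
  then have "psi e = (\<lambda>_. 0)" by (simp add: psi_def fun_eq_iff)
  then show ?thesis by (simp add: contr_coef_eq[OF e] edge_current_def)
next
  case not_loop: False
  have Le: "L e > 0" using pos e by auto
  have \<delta>: "psi e (fst (ends e)) - psi e (snd (ends e)) \<noteq> 0" using psi_ends_ne[OF e not_loop] by simp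
  have scale: "edge_current e * (res x y - (psi e x - psi e y)\<^sup>2 / (psi e (fst (ends e)) - psi e (snd (ends e))))
      = edge_current e * res x y - (psi e x - psi e y)\<^sup>2 / L e" for x y
    unfolding edge_current_def using \<delta> Le by (simp add: field_simps)
  let ?\<delta> = "psi e (fst (ends e)) - psi e (snd (ends e))"
  have "contr_coef V E ends L e * kf_contracted V E ends L e
      = (1/2) * (\<Sum>x\<in>V. \<Sum>y\<in>V. edge_current e * (res x y - (psi e x - psi e y)\<^sup>2 / ?\<delta>))
        - (\<Sum>x\<in>V. edge_current e * (res x (fst (ends e)) - (psi e x - psi e (fst (ends e)))\<^sup>2 / ?\<delta>))"
    unfolding contr_coef_eq[OF e] kf_contracted_eq[OF e not_loop]
    by (simp add: right_diff_distrib sum_distrib_left)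
  also have "\<dots> = (1/2) * (\<Sum>x\<in>V. \<Sum>y\<in>V. edge_current e * res x y - (psi e x - psi e y)\<^sup>2 / L e)
        - (\<Sum>x\<in>V. edge_current e * res x (fst (ends e)) - (psi e x - psi e (fst (ends e)))\<^sup>2 / L e)"
    by (simp only: scale)
  finally show ?thesis
    unfolding kirchhoff_index_eq by (simp add: sum_subtractf sum_distrib_left algebra_simps)
qed

lemma sum_res_left:
  assumes a: "a \<in> V"
  shows "(\<Sum>x\<in>V. res x a) = green_trace + real (card V) * green a a - 2 * green_row a"
proof -
  have "(\<Sum>x\<in>V. res x a) = (\<Sum>x\<in>V. green x x + green a a - 2 * green a x)"
    unfolding res_def using green_sym a by (intro sum.cong) auto
  then show ?thesis
    unfolding green_trace_def green_row_def by (simp add: sum.distrib sum_subtractf sum_distrib_left)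
qed

lemma sum_psi:
  assumes e: "e \<in> E"
  shows "(\<Sum>x\<in>V. psi e x) = green_row (fst (ends e)) - green_row (snd (ends e))"
  unfolding green_row_def using psi_eq[OF e] by (simp add: sum_subtractf cong: sum.cong)

lemma sum_edges_half_energy:
  "(\<Sum>e\<in>E. (1/2) * (\<Sum>x\<in>V. \<Sum>y\<in>V. (psi e x - psi e y)\<^sup>2 / L e)) = kirchhoff_index V E ends L"
proof -
  have "(\<Sum>e\<in>E. \<Sum>x\<in>V. \<Sum>y\<in>V. (psi e x - psi e y)\<^sup>2 / L e)
      = (\<Sum>x\<in>V. \<Sum>y\<in>V. \<Sum>e\<in>E. (psi e x - psi e y)\<^sup>2 / L e)"
    by (subst sum.swap) (simp only: sum.swap[of _ E])
  also have "\<dots> = (\<Sum>x\<in>V. \<Sum>y\<in>V. res x y)"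
    by (intro sum.cong refl) (rule sum_edges_psi_diff_sq)
  finally show ?thesis unfolding kirchhoff_index_eq sum_distrib_left[symmetric] by simp
qed

lemma sum_edges_sum_psi_sq: "(\<Sum>e\<in>E. \<Sum>x\<in>V. psi e x * psi e x / L e) = green_trace"
  unfolding green_trace_def
  by (subst sum.swap) (intro sum.cong refl, rule sum_edges_psi_mult)

lemma edge_contribution:
  assumes e: "e \<in> E"
  defines "a \<equiv> fst (ends e)" and "b \<equiv> snd (ends e)"
  shows "contr_coef V E ends L e * kf_contracted V E ends L e
      - real (card V) * ((1/4) * y_term1 V E ends L e + (3/4) * y_term2 V E ends L e z)
    = edge_current e * kirchhoff_index V E ends L
      - (1/2) * (\<Sum>x\<in>V. \<Sum>y\<in>V. (psi e x - psi e y)\<^sup>2 / L e) + (\<Sum>x\<in>V. psi e x * psi e x / L e)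
      - edge_current e * green_trace - real (card V) * weighted_flux (\<lambda>u. green u u) e
      + 2 * weighted_flux green_row e
      - 2 * ((green a a - green b b) * (green_row a - green_row b) / L e)"
proof -
  have a: "a \<in> V" and b: "b \<in> V" and Le: "L e > 0" using e ends_V pos by (auto simp: a_def b_def)
  have psi_a: "psi e a = green a a - green a b" and psi_b: "psi e b = green a b - green b b"
    using green_sym[OF a b] by (simp_all add: psi_def a_def b_def)
  have "(\<Sum>x\<in>V. (psi e x - psi e a)\<^sup>2 / L e)
      = (\<Sum>x\<in>V. psi e x * psi e x / L e - (2 * psi e a / L e) * psi e x + (psi e a)\<^sup>2 / L e)"
    using Le by (intro sum.cong) (auto simp: power2_eq_square field_simps)
  also have "\<dots> = (\<Sum>x\<in>V. psi e x * psi e x / L e) - (\<Sum>x\<in>V. (2 * psi e a / L e) * psi e x)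
      + (\<Sum>x\<in>V. (psi e a)\<^sup>2 / L e)"
    by (simp only: sum.distrib sum_subtractf)
  also have "(\<Sum>x\<in>V. (2 * psi e a / L e) * psi e x) = (2 * psi e a / L e) * (green_row a - green_row b)"
    by (simp only: sum_distrib_left[symmetric] sum_psi[OF e] a_def b_def)
  finally have sum_sq: "(\<Sum>x\<in>V. (psi e x - psi e a)\<^sup>2 / L e) = (\<Sum>x\<in>V. psi e x * psi e x / L e)
      - (2 * psi e a / L e) * (green_row a - green_row b) + real (card V) * ((psi e a)\<^sup>2 / L e)"
    by simp
  show ?thesis
    unfolding contr_coef_mult_kf_contracted[OF e] y_term1_eq[OF e] y_term2_eq[OF e]
      weighted_flux_def edge_current_def
    unfolding a_def[symmetric] b_def[symmetric]
    unfolding sum_sq sum_res_left[OF a]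
    unfolding psi_a psi_b
    using edge_contribution_algebra[OF Le, of "green a a" "green a b" "green b b" "green_trace"
        "real (card V)" "green_row a" "green_row b"]
    by (simp add: algebra_simps)
qed

theorem kirchhoff_index_contraction_identity:
  "(real (card V) - 4) * kirchhoff_index V E ends L =
     (\<Sum>i\<in>E. contr_coef V E ends L i * kf_contracted V E ends L i) - real (card V) * y_inv V E ends L z"
proof -
  let ?v = "real (card V)" and ?Kf = "kirchhoff_index V E ends L"
  have "(\<Sum>i\<in>E. contr_coef V E ends L i * kf_contracted V E ends L i) - ?v * y_inv V E ends L z
     = (\<Sum>e\<in>E. contr_coef V E ends L e * kf_contracted V E ends L e
        - ?v * ((1/4) * y_term1 V E ends L e + (3/4) * y_term2 V E ends L e z))"
    unfolding y_inv_def by (simp add: sum_subtractf sum.distrib sum_distrib_left algebra_simps)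
  also have "\<dots> = (\<Sum>e\<in>E. edge_current e * ?Kf
        - (1/2) * (\<Sum>x\<in>V. \<Sum>y\<in>V. (psi e x - psi e y)\<^sup>2 / L e) + (\<Sum>x\<in>V. psi e x * psi e x / L e)
        - edge_current e * green_trace - ?v * weighted_flux (\<lambda>u. green u u) e
        + 2 * weighted_flux green_row e
        - 2 * ((green (fst (ends e)) (fst (ends e)) - green (snd (ends e)) (snd (ends e)))
               * (green_row (fst (ends e)) - green_row (snd (ends e))) / L e))"
    by (rule sum.cong[OF refl]) (rule edge_contribution)
  also have "\<dots> = (\<Sum>e\<in>E. edge_current e) * ?Kf
      - (\<Sum>e\<in>E. (1/2) * (\<Sum>x\<in>V. \<Sum>y\<in>V. (psi e x - psi e y)\<^sup>2 / L e))
      + (\<Sum>e\<in>E. \<Sum>x\<in>V. psi e x * psi e x / L e)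
      - (\<Sum>e\<in>E. edge_current e) * green_trace - ?v * (\<Sum>e\<in>E. weighted_flux (\<lambda>u. green u u) e)
      + 2 * (\<Sum>e\<in>E. weighted_flux green_row e)
      - 2 * (\<Sum>e\<in>E. (green (fst (ends e)) (fst (ends e)) - green (snd (ends e)) (snd (ends e)))
                    * (green_row (fst (ends e)) - green_row (snd (ends e))) / L e)"
    by (simp add: sum.distrib sum_subtractf sum_distrib_left sum_distrib_right)
  also have "\<dots> = (?v - 1) * ?Kf - ?Kf + green_trace - (?v - 1) * green_trace - ?v * green_trace
      + 2 * green_total - 2 * green_trace"
    by (simp only: sum_edge_current sum_edges_half_energy sum_edges_sum_psi_sq sum_weighted_flux_diag
        sum_weighted_flux_row sum_edges_diag_row)
  also have "\<dots> = (?v - 4) * ?Kf" by (simp add: kirchhoff_index_green algebra_simps)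
  finally show ?thesis by simp
qed

end

theorem theorem3p5:
  fixes V :: "'v set" and E :: "'e set" and ends :: "'e \<Rightarrow> 'v \<times> 'v"
    and L :: "'e \<Rightarrow> real" and p :: 'v
  assumes "metrized_graph V E ends L"
    and "card V \<ge> 4"
    and "p \<in> V"
  shows "(real (card V) - 4) * kirchhoff_index V E ends L =
         (\<Sum>i\<in>E. contr_coef V E ends L i * kf_contracted V E ends L i)
         - real (card V) * y_inv V E ends L p"
proof -
  \<comment> \<open>The identity holds for any number of vertices.\<close>
  interpret grounded_graph V E ends L p
    using assms(1,3) unfolding metrized_graph_def by unfold_locales auto
  show ?thesis by (rule kirchhoff_index_contraction_identity)
qed

end
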